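(* Let $S$ be a semigroup with finite $\mathcal{R}$-height, and let $A$ be a right ideal of $S$. Let $n$ be the maximum length of a chain of $\mathcal{R}$-classes of $S$ that are contained in $A$. Then $\mathrm{H}_{\mathcal{R}}(A)\leq 2n-1$.
   Context: For a semigroup $S$, $S^1$ denotes $S$ with an identity adjoined if necessary. Green's preorder: $a\leq_{\mathcal{R}} b$ iff $aS^1\subseteq bS^1$; $\mathcal{R}$ is the associated equivalence. $\mathcal{R}$-classes are ordered by $R_a\leq R_b$ iff $a\leq_{\mathcal{R}} b$, and the $\mathcal{R}$-height $\mathrm{H}_{\mathcal{R}}(S)$ is the supremum of the cardinalities of chains of $\mathcal{R}$-classes. A right ideal is a non-empty subset $A$ with $AS\subseteq A$; $\mathrm{H}_{\mathcal{R}}(A)$ is computed in the semigroup $A$ itself. *)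

theory Defs
  imports Main "HOL-Library.Extended_Nat"
begin

text \<open>All Green notions are relative
to the carrier T, using T^1 (identity adjoined if necessary).\<close>

definition subsemigroup :: "'a::semigroup_mult set \<Rightarrow> bool" where
  "subsemigroup T \<longleftrightarrow> (\<forall>x\<in>T. \<forall>y\<in>T. x * y \<in> T)"

definition R_le :: "'a::semigroup_mult set \<Rightarrow> 'a \<Rightarrow> 'a \<Rightarrow> bool" where
  "R_le T a b \<longleftrightarrow> a = b \<or> (\<exists>t\<in>T. a = b * t)"

definition R_eq :: "'a::semigroup_mult set \<Rightarrow> 'a \<Rightarrow> 'a \<Rightarrow> bool" where
  "R_eq T a b \<longleftrightarrow> R_le T a b \<and> R_le T b a"

definition R_class :: "'a::semigroup_mult set \<Rightarrow> 'a \<Rightarrow> 'a set" where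
  "R_class T a = {b \<in> T. R_eq T a b}"

definition R_classes :: "'a::semigroup_mult set \<Rightarrow> 'a set set" where
  "R_classes T = R_class T ` T"

definition R_class_le :: "'a::semigroup_mult set \<Rightarrow> 'a set \<Rightarrow> 'a set \<Rightarrow> bool" where
  "R_class_le T X Y \<longleftrightarrow> (\<exists>x\<in>X. \<exists>y\<in>Y. R_le T x y)"

definition R_chain :: "'a::semigroup_mult set \<Rightarrow> 'a set set \<Rightarrow> bool" where
  "R_chain T C \<longleftrightarrow> C \<subseteq> R_classes T \<and>
     (\<forall>X\<in>C. \<forall>Y\<in>C. R_class_le T X Y \<or> R_class_le T Y X)"

text \<open>R-height: supremum of the cardinalities of chains of R-classes
(an infinite chain has finite subchains of every size, so it suffices to take finite chains).\<close>
definition R_height :: "'a::semigroup_mult set \<Rightarrow> enat" where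
  "R_height T = Sup {enat (card C) | C. R_chain T C \<and> finite C}"

definition right_ideal :: "'a::semigroup_mult set \<Rightarrow> 'a set \<Rightarrow> bool" where
  "right_ideal S A \<longleftrightarrow> A \<noteq> {} \<and> A \<subseteq> S \<and> (\<forall>a\<in>A. \<forall>s\<in>S. a * s \<in> A)"

end

theory Submission
  imports Defs
begin

text \<open>Represent a chain of \<open>\<R>\<close>-classes of \<open>A\<close> by pairwise comparable elements of \<open>A\<close>
and split them according to whether \<open>a \<in> aA\<close>. Below such an element the orders
\<open>\<le>\<^sub>\<R>\<close> of \<open>S\<close> and of \<open>A\<close> agree, so these elements lie in distinct \<open>\<R>\<close>-classes of \<open>S\<close>
inside \<open>A\<close>: at most \<open>n\<close> of them. The remaining elements have singleton \<open>\<R>\<close>-classes in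
\<open>A\<close> which again lie in distinct \<open>\<R>\<close>-classes of \<open>S\<close>; if \<open>y\<close> is the least of them, then
\<open>y\<^sup>2\<close> lies strictly below all of them, so they number at most \<open>n - 1\<close>.\<close>

definition R_comparable :: "'a::semigroup_mult set \<Rightarrow> 'a set \<Rightarrow> bool" where
  "R_comparable T Z \<longleftrightarrow> (\<forall>a\<in>Z. \<forall>b\<in>Z. R_le T a b \<or> R_le T b a)"

definition has_right_identity_in :: "'a::semigroup_mult set \<Rightarrow> 'a \<Rightarrow> bool" where
  "has_right_identity_in A a \<longleftrightarrow> (\<exists>u\<in>A. a * u = a)"

lemma finite_total_transp_has_least:
  assumes "finite F" "F \<noteq> {}" "transp P" "\<forall>x\<in>F. \<forall>y\<in>F. P x y \<or> P y x"
  shows "\<exists>m\<in>F. \<forall>x\<in>F. P m x"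
  using assms
proof (induction F rule: finite_ne_induct)
  case (singleton x)
  then show ?case by auto
next
  case (insert x F)
  then obtain m where m: "m \<in> F" "\<forall>y\<in>F. P m y" by auto
  show ?case
  proof (cases "P x m")
    case True
    then show ?thesis using m insert.prems by (auto dest: transpD)
  next
    case False
    then show ?thesis using m insert.prems by auto
  qed
qed

lemma R_le_refl [simp]: "R_le T a a"
  unfolding R_le_def by simp

lemma R_le_trans:
  assumes "subsemigroup T" "R_le T a b" "R_le T b c"
  shows "R_le T a c"
  using assms unfolding subsemigroup_def R_le_def by (metis mult.assoc)

lemma R_le_subset: "A \<subseteq> S \<Longrightarrow> R_le A a b \<Longrightarrow> R_le S a b"
  unfolding R_le_def by blast

lemma R_comparable_subset: "A \<subseteq> S \<Longrightarrow> R_comparable A Z \<Longrightarrow> R_comparable S Z"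
  unfolding R_comparable_def using R_le_subset by blast

lemma R_comparable_mono: "Z' \<subseteq> Z \<Longrightarrow> R_comparable T Z \<Longrightarrow> R_comparable T Z'"
  unfolding R_comparable_def by blast

lemma R_class_self: "a \<in> T \<Longrightarrow> a \<in> R_class T a"
  unfolding R_class_def R_eq_def by simp

lemma R_class_eq_iff:
  assumes "subsemigroup T" "a \<in> T" "b \<in> T"
  shows "R_class T a = R_class T b \<longleftrightarrow> R_eq T a b"
  using assms R_class_self[of _ T] R_le_trans[OF assms(1)]
  unfolding R_class_def R_eq_def by blast

lemma R_class_le_iff:
  assumes "subsemigroup T" "a \<in> T" "b \<in> T"
  shows "R_class_le T (R_class T a) (R_class T b) \<longleftrightarrow> R_le T a b"
  using assms R_class_self[of _ T] R_le_trans[OF assms(1)]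
  unfolding R_class_le_def R_class_def R_eq_def by blast

lemma R_chain_R_class_image:
  assumes "subsemigroup T" "Z \<subseteq> T" "R_comparable T Z"
  shows "R_chain T (R_class T ` Z)"
  unfolding R_chain_def R_classes_def
proof (intro conjI ballI)
  show "R_class T ` Z \<subseteq> R_class T ` T"
    using assms(2) by blast
next
  fix X Y assume "X \<in> R_class T ` Z" "Y \<in> R_class T ` Z"
  then obtain a b where "a \<in> Z" "b \<in> Z" "X = R_class T a" "Y = R_class T b"
    by blast
  then show "R_class_le T X Y \<or> R_class_le T Y X"
    using assms R_class_le_iff[OF assms(1)] unfolding R_comparable_def by blast
qed

lemma R_chain_representatives:
  assumes "subsemigroup T" "R_chain T C"
  obtains Z where "Z \<subseteq> T" "R_comparable T Z" "bij_betw (R_class T) Z C"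
proof -
  have "\<forall>X\<in>C. \<exists>a. a \<in> T \<and> R_class T a = X"
    using assms(2) unfolding R_chain_def R_classes_def by auto
  then obtain r where r: "\<And>X. X \<in> C \<Longrightarrow> r X \<in> T \<and> R_class T (r X) = X"
    by metis
  have "R_comparable T (r ` C)"
    using assms r R_class_le_iff[OF assms(1)]
    unfolding R_comparable_def R_chain_def by (metis imageE)
  moreover have "bij_betw (R_class T) (r ` C) C"
    using r by (auto simp: bij_betw_def inj_on_def image_image)
  ultimately show ?thesis
    using that r by blast
qed

lemma right_ideal_subsemigroup: "right_ideal S A \<Longrightarrow> subsemigroup A"
  unfolding right_ideal_def subsemigroup_def by blast

lemma R_class_subset_right_ideal:
  assumes "right_ideal S A" "a \<in> A"
  shows "R_class S a \<subseteq> A"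
proof
  fix b assume "b \<in> R_class S a"
  then have "b = a \<or> (\<exists>t\<in>S. b = a * t)"
    unfolding R_class_def R_eq_def R_le_def by blast
  then show "b \<in> A"
    using assms unfolding right_ideal_def by blast
qed

lemma R_le_right_ideal_if_has_right_identity:
  assumes "right_ideal S A" "has_right_identity_in A a" "R_le S b a"
  shows "R_le A b a"
proof (cases "b = a")
  case False
  obtain u where u: "u \<in> A" "a * u = a"
    using assms(2) unfolding has_right_identity_in_def by blast
  obtain s where s: "s \<in> S" "b = a * s"
    using assms(3) False unfolding R_le_def by blast
  have "b = a * (u * s)"
    using u s by (metis mult.assoc)
  moreover have "u * s \<in> A"
    using assms(1) u s unfolding right_ideal_def by blast
  ultimately show ?thesis
    unfolding R_le_def by blast
qed simp

lemma eq_if_R_le_right_ideal_no_right_identity: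
  assumes "right_ideal S A" "R_le A a b" "R_le S b a" "\<not> has_right_identity_in A b"
  shows "a = b"
proof (rule ccontr)
  assume "a \<noteq> b"
  then obtain t s where "t \<in> A" "a = b * t" "s \<in> S" "b = a * s"
    using assms(2,3) unfolding R_le_def by metis
  then have "b * (t * s) = b"
    by (metis mult.assoc)
  moreover have "t * s \<in> A"
    using assms(1) \<open>t \<in> A\<close> \<open>s \<in> S\<close> unfolding right_ideal_def by blast
  ultimately show False
    using assms(4) unfolding has_right_identity_in_def by blast
qed

text \<open>\<open>y\<^sup>2 \<le>\<^sub>\<R> y\<close> holds in \<open>A\<close>, so \<open>y \<le>\<^sub>\<R> y\<^sup>2\<close> in \<open>S\<close> would force \<open>y\<^sup>2 = y\<close>, i.e. \<open>y \<in> yA\<close>.\<close>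

lemma not_R_le_square_if_no_right_identity:
  assumes "right_ideal S A" "y \<in> A" "\<not> has_right_identity_in A y"
  shows "\<not> R_le S y (y * y)"
proof
  assume "R_le S y (y * y)"
  moreover have "R_le A (y * y) y"
    using assms(2) unfolding R_le_def by blast
  ultimately have "y * y = y"
    using eq_if_R_le_right_ideal_no_right_identity assms by blast
  then show False
    using assms(2,3) unfolding has_right_identity_in_def by blast
qed

lemma inj_on_R_class_if_has_right_identity:
  assumes "subsemigroup S" "right_ideal S A" "Z \<subseteq> A"
    and "\<forall>z\<in>Z. has_right_identity_in A z" "inj_on (R_class A) Z"
  shows "inj_on (R_class S) Z"
proof (rule inj_onI)
  fix a b assume ab: "a \<in> Z" "b \<in> Z" "R_class S a = R_class S b"
  have A: "a \<in> A" "b \<in> A"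
    using ab assms(3) by blast+
  then have "a \<in> S" "b \<in> S"
    using assms(2) unfolding right_ideal_def by blast+
  then have "R_le S a b" "R_le S b a"
    using ab(3) R_class_eq_iff[OF assms(1)] unfolding R_eq_def by blast+
  then have "R_eq A a b"
    using R_le_right_ideal_if_has_right_identity[OF assms(2)] assms(4) ab(1,2)
    unfolding R_eq_def by blast
  then have "R_class A a = R_class A b"
    using R_class_eq_iff[OF right_ideal_subsemigroup[OF assms(2)] A] by blast
  then show "a = b"
    using inj_onD[OF assms(5)] ab(1,2) by blast
qed

lemma inj_on_R_class_if_no_right_identity:
  assumes "right_ideal S A" "Z \<subseteq> A" "R_comparable A Z"
    and "\<forall>z\<in>Z. \<not> has_right_identity_in A z"
  shows "inj_on (R_class S) Z"
proof (rule inj_onI)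
  fix a b assume ab: "a \<in> Z" "b \<in> Z" "R_class S a = R_class S b"
  have "a \<in> S"
    using ab(1) assms(1,2) unfolding right_ideal_def by blast
  then have "R_le S a b" "R_le S b a"
    using ab(3) R_class_self[of a S] unfolding R_class_def R_eq_def by blast+
  moreover have "R_le A a b \<or> R_le A b a"
    using assms(3) ab(1,2) unfolding R_comparable_def by blast
  ultimately show "a = b"
    using eq_if_R_le_right_ideal_no_right_identity[OF assms(1)] assms(4) ab(1,2) by metis
qed

lemma R_comparable_extension_below_no_right_identity:
  assumes "subsemigroup S" "right_ideal S A" "finite Z" "Z \<noteq> {}" "Z \<subseteq> A"
    and "R_comparable A Z" "\<forall>z\<in>Z. \<not> has_right_identity_in A z"
  obtains W where "W \<subseteq> A" "finite W" "R_comparable S W"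
    "card (R_class S ` W) = Suc (card Z)"
proof -
  have AS: "A \<subseteq> S"
    using assms(2) unfolding right_ideal_def by blast
  have Z_comp: "R_comparable S Z"
    using R_comparable_subset[OF AS assms(6)] .
  obtain y where y: "y \<in> Z" "\<forall>z\<in>Z. R_le S y z"
    using finite_total_transp_has_least[OF assms(3,4), of "R_le S"] Z_comp
      R_le_trans[OF assms(1)] unfolding R_comparable_def transp_def by blast
  have yA: "y \<in> A" "y * y \<in> A"
    using y(1) assms(2,5) unfolding right_ideal_def by blast+
  have square_below: "R_le S (y * y) z" if "z \<in> Z" for z
    using R_le_trans[OF assms(1) _ y(2)[rule_format, OF that]] yA AS
    unfolding R_le_def by blast
  have "R_class S (y * y) \<notin> R_class S ` Z"
  proof
    assume "R_class S (y * y) \<in> R_class S ` Z"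
    then obtain z where "z \<in> Z" "R_le S z (y * y)"
      using R_class_self[of "y * y" S] yA AS unfolding R_class_def R_eq_def by blast
    then have "R_le S y (y * y)"
      using R_le_trans[OF assms(1)] y(2) by blast
    then show False
      using not_R_le_square_if_no_right_identity assms(2,7) y(1) yA(1) by blast
  qed
  then have "card (R_class S ` insert (y * y) Z) = Suc (card Z)"
    using assms(3) card_image[OF inj_on_R_class_if_no_right_identity[OF assms(2,5,6,7)]]
    by simp
  moreover have "R_comparable S (insert (y * y) Z)"
    using Z_comp square_below unfolding R_comparable_def by auto
  ultimately show ?thesis
    using that yA assms(3,5) by blast
qed

lemma card_R_comparable_right_ideal_le:
  assumes "subsemigroup S" "right_ideal S A" "finite Z" "Z \<subseteq> A"
    and "R_comparable A Z" "inj_on (R_class A) Z"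
    and bound: "\<And>W. W \<subseteq> A \<Longrightarrow> finite W \<Longrightarrow> R_comparable S W \<Longrightarrow> card (R_class S ` W) \<le> n"
  shows "card Z \<le> 2 * n - 1"
proof -
  define G where "G = {z\<in>Z. has_right_identity_in A z}"
  define B where "B = Z - G"
  have AS: "A \<subseteq> S"
    using assms(2) unfolding right_ideal_def by blast
  have GB: "G \<subseteq> Z" "B \<subseteq> Z" "finite G" "finite B"
    using assms(3) unfolding G_def B_def by auto
  have "card Z = card G + card B"
    using GB assms(3) unfolding B_def by (simp add: card_Diff_subset card_mono)
  moreover have "card G \<le> n"
  proof -
    have "G \<subseteq> A" "\<forall>z\<in>G. has_right_identity_in A z" "inj_on (R_class A) G"
      using GB(1) assms(4) inj_on_subset[OF assms(6) GB(1)] unfolding G_def by auto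
    then have "inj_on (R_class S) G"
      by (rule inj_on_R_class_if_has_right_identity[OF assms(1,2)])
    moreover have "R_comparable S G"
      using R_comparable_subset[OF AS R_comparable_mono[OF GB(1) assms(5)]] .
    ultimately show ?thesis
      using bound[of G] card_image GB(1,3) assms(4) by fastforce
  qed
  moreover have "card B \<le> n - 1"
  proof (cases "B = {}")
    case False
    have "B \<subseteq> A" "R_comparable A B" "\<forall>z\<in>B. \<not> has_right_identity_in A z"
      using GB(2) assms(4) R_comparable_mono[OF GB(2) assms(5)] unfolding B_def G_def by auto
    then obtain W where W: "W \<subseteq> A" "finite W" "R_comparable S W"
      and card_W: "card (R_class S ` W) = Suc (card B)"
      using R_comparable_extension_below_no_right_identity[OF assms(1,2) GB(4) False] by blast
    show ?thesis
      using bound[OF W] card_W by simp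
  qed simp
  ultimately show ?thesis
    by arith
qed

lemma card_R_class_image_le_chain_bound:
  assumes "subsemigroup S" "right_ideal S A" "W \<subseteq> A" "R_comparable S W"
    and "\<forall>C. R_chain S C \<and> (\<forall>X\<in>C. X \<subseteq> A) \<longrightarrow> finite C \<and> card C \<le> n"
  shows "card (R_class S ` W) \<le> n"
proof -
  have "W \<subseteq> S"
    using assms(2,3) unfolding right_ideal_def by blast
  then have "R_chain S (R_class S ` W)"
    using R_chain_R_class_image[OF assms(1) _ assms(4)] by blast
  moreover have "\<forall>X\<in>R_class S ` W. X \<subseteq> A"
    using R_class_subset_right_ideal[OF assms(2)] assms(3) by blast
  ultimately show ?thesis
    using assms(5) by blast
qed

theorem theorem3p6:
  fixes S A :: "'a::semigroup_mult set" and n :: nat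
  assumes "subsemigroup S" and "S \<noteq> {}"
    and "R_height S < \<infinity>"
    and "right_ideal S A"
    and "\<exists>C. R_chain S C \<and> finite C \<and> (\<forall>X\<in>C. X \<subseteq> A) \<and> card C = n"
    and "\<forall>C. R_chain S C \<and> (\<forall>X\<in>C. X \<subseteq> A) \<longrightarrow> finite C \<and> card C \<le> n"
  shows "R_height A \<le> enat (2 * n - 1)"
proof -
  have "card D \<le> 2 * n - 1" if D: "R_chain A D" "finite D" for D
  proof -
    obtain Z where Z: "Z \<subseteq> A" "R_comparable A Z" "bij_betw (R_class A) Z D"
      using R_chain_representatives[OF right_ideal_subsemigroup[OF assms(4)] D(1)] .
    then have "finite Z" "card Z = card D"
      using D(2) bij_betw_finite bij_betw_same_card by blast+
    moreover have "card Z \<le> 2 * n - 1"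
      by (rule card_R_comparable_right_ideal_le[OF assms(1,4) \<open>finite Z\<close> Z(1,2)])
        (use Z(3) card_R_class_image_le_chain_bound[OF assms(1,4) _ _ assms(6)]
          in \<open>auto simp: bij_betw_def\<close>)
    ultimately show ?thesis
      by simp
  qed
  then show ?thesis
    unfolding R_height_def by (auto intro: Sup_least)
qed

end
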